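(* Let $tn=(T,\prec^+,\alpha)$ be a task network in a domain $D$ with $C_d\neq\infty$. Then $tn$ can be decomposed into at most $C_c^{\sum_{i=0}^{C_d-1} C_\#\cdot C_s^i}$ pairwise non-isomorphic primitive task networks $tn'=(T',\prec'^+,\alpha')$, and each of these satisfies $|T'|\le |T|+C_\#\cdot(C_s^{C_d}-1)$.
   Context: An HTN domain is $D=(F,A,\mathcal{C},\delta,M)$ with propositions $F$, actions $A$, compound task names $\mathcal{C}$ ($A\cap\mathcal{C}=\emptyset$), action semantics $\delta$, and decomposition methods $M$, a set of pairs $(c,tn_m)$ with $c\in\mathcal{C}$ and $tn_m$ a task network. A task network is $(T,\prec^+,\alpha)$ with $T$ a finite set of tasks, $\prec^+$ a strict partial order on $T$, $\alpha:T\to A\cup\mathcal{C}$; a task $t$ is compound if $\alpha(t)\in\mathcal{C}$, and the network is primitive if it has no compound tasks. Decomposing a compound task $t$ via a method $(\alpha(t),tn_m)\in M$ replaces $t$ by the tasks of $tn_m$ (ordered among themselves as in $tn_m$), each related to the other tasks exactly as $t$ was. Measures: $C_\#=|\{t\in T:\alpha(t)\in\mathcal{C}\}|$ is the number of compound tasks in $tn$; $C_s=\max\{|T_m| : (c,(T_m,\prec^+_m,\alpha_m))\in M\}$; $C_c=\max_{c\in\mathcal{C}}|\{tn_m : (c,tn_m)\in M\}|$, the maximum number of pairwise non-isomorphic networks a compound task can be decomposed into; $C_d$ is defined recursively: $C_d=0$ for primitive networks, and a network has $C_d=i$ if $i$ is the smallest integer such that every decomposition of all compound tasks of the network results in a network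 with $C_d\le i-1$; $C_d=\infty$ if no such $i$ exists. *)

theory Defs
  imports Main
begin

text \<open>Task networks: task identifiers are natural numbers (an unbounded supply
of fresh identifiers), labels are of an arbitrary type 'l (actions and
compound task names).\<close>

record 'l tnet =
  tasks :: "nat set"
  tord  :: "(nat \<times> nat) set"
  tlab  :: "nat \<Rightarrow> 'l"

definition wf_tnet :: "'l set \<Rightarrow> 'l tnet \<Rightarrow> bool" where
  "wf_tnet L tn \<longleftrightarrow> finite (tasks tn) \<and> tord tn \<subseteq> tasks tn \<times> tasks tn
     \<and> irrefl (tord tn) \<and> trans (tord tn) \<and> (\<forall>t\<in>tasks tn. tlab tn t \<in> L)"

text \<open>HTN domain (only the parts relevant here): actions A, compound task
names C, methods M. Propositions and action semantics play no role.\<close>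
definition wf_domain :: "'l set \<Rightarrow> 'l set \<Rightarrow> ('l \<times> 'l tnet) set \<Rightarrow> bool" where
  "wf_domain A C M \<longleftrightarrow> A \<inter> C = {} \<and> finite A \<and> finite C \<and> finite M
     \<and> (\<forall>(c, tnm)\<in>M. c \<in> C \<and> wf_tnet (A \<union> C) tnm)"

definition tn_iso :: "'l tnet \<Rightarrow> 'l tnet \<Rightarrow> bool" where
  "tn_iso tn1 tn2 \<longleftrightarrow> (\<exists>f. bij_betw f (tasks tn1) (tasks tn2)
     \<and> (\<forall>x\<in>tasks tn1. tlab tn2 (f x) = tlab tn1 x)
     \<and> (\<forall>x\<in>tasks tn1. \<forall>y\<in>tasks tn1. (x, y) \<in> tord tn1 \<longleftrightarrow> (f x, f y) \<in> tord tn2))"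

definition compound_tasks :: "'l set \<Rightarrow> 'l tnet \<Rightarrow> nat set" where
  "compound_tasks C tn = {t \<in> tasks tn. tlab tn t \<in> C}"

definition primitive :: "'l set \<Rightarrow> 'l tnet \<Rightarrow> bool" where
  "primitive C tn \<longleftrightarrow> compound_tasks C tn = {}"

definition decomp_with :: "'l tnet \<Rightarrow> nat \<Rightarrow> 'l tnet \<Rightarrow> (nat \<Rightarrow> nat) \<Rightarrow> 'l tnet" where
  "decomp_with tn t tnm \<phi> =
    \<lparr> tasks = (tasks tn - {t}) \<union> \<phi> ` tasks tnm,
      tord = {(x, y). (x, y) \<in> tord tn \<and> x \<noteq> t \<and> y \<noteq> t}
             \<union> {(\<phi> x, \<phi> y) | x y. (x, y) \<in> tord tnm}
             \<union> {(\<phi> x, u) | x u. x \<in> tasks tnm \<and> (t, u) \<in> tord tn}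
             \<union> {(u, \<phi> x) | u x. x \<in> tasks tnm \<and> (u, t) \<in> tord tn},
      tlab = (\<lambda>y. if y \<in> \<phi> ` tasks tnm then tlab tnm (inv_into (tasks tnm) \<phi> y)
                  else tlab tn y) \<rparr>"

definition decomp_step :: "'l set \<Rightarrow> ('l \<times> 'l tnet) set \<Rightarrow> 'l tnet \<Rightarrow> nat \<Rightarrow> 'l tnet \<Rightarrow> bool" where
  "decomp_step C M tn t tn' \<longleftrightarrow> t \<in> compound_tasks C tn \<and>
     (\<exists>tnm \<phi>. (tlab tn t, tnm) \<in> M \<and> inj_on \<phi> (tasks tnm)
        \<and> \<phi> ` tasks tnm \<inter> tasks tn = {} \<and> tn' = decomp_with tn t tnm \<phi>)"

definition decomposes_to :: "'l set \<Rightarrow> ('l \<times> 'l tnet) set \<Rightarrow> 'l tnet \<Rightarrow> 'l tnet \<Rightarrow> bool" where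
  "decomposes_to C M = (\<lambda>tn tn'. \<exists>t. decomp_step C M tn t tn')\<^sup>*\<^sup>*"

fun decomp_seq :: "'l set \<Rightarrow> ('l \<times> 'l tnet) set \<Rightarrow> 'l tnet \<Rightarrow> nat list \<Rightarrow> 'l tnet \<Rightarrow> bool" where
  "decomp_seq C M tn [] tn' \<longleftrightarrow> tn' = tn"
| "decomp_seq C M tn (t # ts) tn'' \<longleftrightarrow> (\<exists>tn'. decomp_step C M tn t tn' \<and> decomp_seq C M tn' ts tn'')"

definition decomp_all :: "'l set \<Rightarrow> ('l \<times> 'l tnet) set \<Rightarrow> 'l tnet \<Rightarrow> 'l tnet \<Rightarrow> bool" where
  "decomp_all C M tn tn' \<longleftrightarrow> (\<exists>ts. distinct ts \<and> set ts = compound_tasks C tn \<and> decomp_seq C M tn ts tn')"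

text \<open>depth_le C M tn i  means  C_d(tn) \<le> i.\<close>
fun depth_le :: "'l set \<Rightarrow> ('l \<times> 'l tnet) set \<Rightarrow> 'l tnet \<Rightarrow> nat \<Rightarrow> bool" where
  "depth_le C M tn 0 \<longleftrightarrow> primitive C tn"
| "depth_le C M tn (Suc i) \<longleftrightarrow> (\<forall>tn'. decomp_all C M tn tn' \<longrightarrow> depth_le C M tn' i)"

text \<open>C_d (only meaningful when finite, i.e. some depth bound exists).\<close>
definition C_d :: "'l set \<Rightarrow> ('l \<times> 'l tnet) set \<Rightarrow> 'l tnet \<Rightarrow> nat" where
  "C_d C M tn = (LEAST i. depth_le C M tn i)"

definition C_num :: "'l set \<Rightarrow> 'l tnet \<Rightarrow> nat" where
  "C_num C tn = card (compound_tasks C tn)"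

definition C_s :: "('l \<times> 'l tnet) set \<Rightarrow> nat" where
  "C_s M = Max (insert 0 ((\<lambda>(c, tnm). card (tasks tnm)) ` M))"

definition n_iso_classes :: "'l tnet set \<Rightarrow> nat" where
  "n_iso_classes X = card ((\<lambda>x. {y \<in> X. tn_iso x y}) ` X)"

definition C_c :: "'l set \<Rightarrow> ('l \<times> 'l tnet) set \<Rightarrow> nat" where
  "C_c C M = Max (insert 0 ((\<lambda>c. n_iso_classes {tnm. (c, tnm) \<in> M}) ` C))"

end

theory Submission
  imports Defs
begin

text \<open>
  Decomposition respects isomorphism, and decomposing two distinct tasks in either order gives
  isomorphic results. Hence every decomposition of a network N into a primitive network can be
  rearranged, up to isomorphism, to start with one round that decomposes each of the C_#
  compound tasks of N once. Up to isomorphism such a round has at most C_c^C_# outcomes, and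
  each outcome has depth at most C_d - 1, at most C_# C_s compound tasks and at most
  C_# (C_s - 1) more tasks than N. Induction on the depth sums these up to
  C_c^(C_# + C_# C_s + ... + C_# C_s^(C_d - 1)) isomorphism classes and |T| + C_# (C_s^C_d - 1)
  tasks.
\<close>

section \<open>Isomorphism of task networks\<close>

definition tn_iso_via :: "(nat \<Rightarrow> nat) \<Rightarrow> 'l tnet \<Rightarrow> 'l tnet \<Rightarrow> bool" where
  "tn_iso_via f tn1 tn2 \<longleftrightarrow> bij_betw f (tasks tn1) (tasks tn2)
     \<and> (\<forall>x\<in>tasks tn1. tlab tn2 (f x) = tlab tn1 x)
     \<and> (\<forall>x\<in>tasks tn1. \<forall>y\<in>tasks tn1. (x, y) \<in> tord tn1 \<longleftrightarrow> (f x, f y) \<in> tord tn2)"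

lemma tn_iso_iff_via: "tn_iso N N' \<longleftrightarrow> (\<exists>f. tn_iso_via f N N')"
  unfolding tn_iso_def tn_iso_via_def by blast

lemma tn_iso_viaD:
  assumes "tn_iso_via f N N'"
  shows "bij_betw f (tasks N) (tasks N')"
    and "x \<in> tasks N \<Longrightarrow> f x \<in> tasks N'"
    and "x \<in> tasks N \<Longrightarrow> tlab N' (f x) = tlab N x"
    and "x \<in> tasks N \<Longrightarrow> y \<in> tasks N \<Longrightarrow> (f x, f y) \<in> tord N' \<longleftrightarrow> (x, y) \<in> tord N"
    and "x \<in> tasks N \<Longrightarrow> y \<in> tasks N \<Longrightarrow> f x = f y \<longleftrightarrow> x = y"
  using assms unfolding tn_iso_via_def bij_betw_def inj_on_def by auto

lemma tn_iso_via_id: "tn_iso_via id N N"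
  unfolding tn_iso_via_def by auto

lemma tn_iso_refl: "tn_iso N N"
  using tn_iso_via_id tn_iso_iff_via by blast

lemma tn_iso_via_comp:
  assumes "tn_iso_via f N1 N2" and "tn_iso_via g N2 N3"
  shows "tn_iso_via (g \<circ> f) N1 N3"
  using assms bij_betw_trans[OF tn_iso_viaD(1)[OF assms(1)] tn_iso_viaD(1)[OF assms(2)]]
  unfolding tn_iso_via_def by (auto dest: bij_betwE)

lemma tn_iso_trans: "tn_iso N1 N2 \<Longrightarrow> tn_iso N2 N3 \<Longrightarrow> tn_iso N1 N3"
  using tn_iso_via_comp tn_iso_iff_via by metis

lemma tn_iso_via_inv:
  assumes "tn_iso_via f N1 N2"
  shows "tn_iso_via (inv_into (tasks N1) f) N2 N1"
proof -
  let ?g = "inv_into (tasks N1) f"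
  have bij: "bij_betw f (tasks N1) (tasks N2)" using tn_iso_viaD(1)[OF assms] .
  have "bij_betw ?g (tasks N2) (tasks N1)" using bij bij_betw_inv_into by blast
  moreover have "f (?g y) = y" "?g y \<in> tasks N1" if "y \<in> tasks N2" for y
    using that bij bij_betw_inv_into_right bij_betwE[OF bij_betw_inv_into[OF bij]] by fastforce+
  ultimately show ?thesis
    using assms unfolding tn_iso_via_def by metis
qed

lemma tn_iso_sym: "tn_iso N1 N2 \<Longrightarrow> tn_iso N2 N1"
  using tn_iso_via_inv tn_iso_iff_via by metis

lemma tn_iso_card_tasks: "tn_iso N1 N2 \<Longrightarrow> card (tasks N1) = card (tasks N2)"
  unfolding tn_iso_def using bij_betw_same_card by metis

lemma compound_tasks_iff: "t \<in> compound_tasks C N \<longleftrightarrow> t \<in> tasks N \<and> tlab N t \<in> C"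
  unfolding compound_tasks_def by blast

lemma tn_iso_via_compound_tasks:
  assumes "tn_iso_via f N N'"
  shows "f ` compound_tasks C N = compound_tasks C N'"
proof -
  have "compound_tasks C N' = {y \<in> f ` tasks N. tlab N' y \<in> C}"
    using tn_iso_viaD(1)[OF assms] unfolding compound_tasks_def bij_betw_def by simp
  also have "\<dots> = f ` compound_tasks C N"
    using tn_iso_viaD(3)[OF assms] unfolding compound_tasks_def by auto
  finally show ?thesis by simp
qed

lemma tn_iso_primitive: "tn_iso N N' \<Longrightarrow> primitive C N \<longleftrightarrow> primitive C N'"
  using tn_iso_via_compound_tasks unfolding tn_iso_iff_via primitive_def by (metis image_is_empty)

definition iso_cover :: "'l tnet set \<Rightarrow> 'l tnet set \<Rightarrow> bool" where
  "iso_cover F X \<longleftrightarrow> finite F \<and> (\<forall>x\<in>X. \<exists>z\<in>F. tn_iso x z)"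

lemma card_le_card_if_iso_cover:
  assumes "iso_cover F S" and "\<forall>x\<in>S. \<forall>y\<in>S. x \<noteq> y \<longrightarrow> \<not> tn_iso x y"
  shows "finite S \<and> card S \<le> card F"
proof -
  obtain rep where rep: "\<And>x. x \<in> S \<Longrightarrow> rep x \<in> F \<and> tn_iso x (rep x)"
    using assms(1) unfolding iso_cover_def by metis
  have "inj_on rep S"
    by (rule inj_onI) (metis assms(2) rep tn_iso_sym tn_iso_trans)
  moreover have "rep ` S \<subseteq> F" using rep by blast
  ultimately show ?thesis
    using assms(1) card_inj_on_le finite_imageD finite_subset unfolding iso_cover_def by metis
qed

section \<open>Single decomposition steps\<close>

definition proper_tnet :: "'l tnet \<Rightarrow> bool" where
  "proper_tnet N \<longleftrightarrow> finite (tasks N) \<and> tord N \<subseteq> tasks N \<times> tasks N \<and> irrefl (tord N)"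

definition proper_methods :: "('l \<times> 'l tnet) set \<Rightarrow> bool" where
  "proper_methods M \<longleftrightarrow> (\<forall>(c, m)\<in>M. proper_tnet m)"

lemma wf_tnet_imp_proper_tnet: "wf_tnet L N \<Longrightarrow> proper_tnet N"
  unfolding wf_tnet_def proper_tnet_def by blast

lemma proper_tnet_tordD: "proper_tnet N \<Longrightarrow> (x, y) \<in> tord N \<Longrightarrow> x \<in> tasks N \<and> y \<in> tasks N"
  unfolding proper_tnet_def by blast

lemma proper_tnet_irrefl: "proper_tnet N \<Longrightarrow> (x, x) \<notin> tord N"
  unfolding proper_tnet_def irrefl_def by blast

lemma proper_methodsD: "proper_methods M \<Longrightarrow> (c, m) \<in> M \<Longrightarrow> proper_tnet m"
  unfolding proper_methods_def by blast

lemma exists_fresh_renaming: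
  assumes "finite X"
  shows "\<exists>\<phi> :: nat \<Rightarrow> nat. inj \<phi> \<and> range \<phi> \<inter> X = {}"
proof (intro exI conjI)
  define k where "k = Suc (Max (insert 0 X))"
  have "x < k" if "x \<in> X" for x
    using assms that unfolding k_def by (simp add: le_imp_less_Suc)
  then show "inj (\<lambda>x. x + k)" and "range (\<lambda>x. x + k) \<inter> X = {}"
    by (auto simp: inj_on_def)
qed

lemma tasks_decomp_with: "tasks (decomp_with N t m \<phi>) = (tasks N - {t}) \<union> \<phi> ` tasks m"
  unfolding decomp_with_def by simp

lemma tord_decomp_with: "tord (decomp_with N t m \<phi>) = {(x, y). (x, y) \<in> tord N \<and> x \<noteq> t \<and> y \<noteq> t}
    \<union> {(\<phi> x, \<phi> y) | x y. (x, y) \<in> tord m}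
    \<union> {(\<phi> x, u) | x u. x \<in> tasks m \<and> (t, u) \<in> tord N}
    \<union> {(u, \<phi> x) | u x. x \<in> tasks m \<and> (u, t) \<in> tord N}"
  unfolding decomp_with_def by simp

lemma tlab_decomp_with_new:
  "inj_on \<phi> (tasks m) \<Longrightarrow> a \<in> tasks m \<Longrightarrow> tlab (decomp_with N t m \<phi>) (\<phi> a) = tlab m a"
  unfolding decomp_with_def by simp

lemma tlab_decomp_with_old:
  "\<phi> ` tasks m \<inter> tasks N = {} \<Longrightarrow> u \<in> tasks N \<Longrightarrow> tlab (decomp_with N t m \<phi>) u = tlab N u"
  unfolding decomp_with_def by auto

locale decomp_setting =
  fixes N :: "'l tnet" and t :: nat and m :: "'l tnet" and \<phi> :: "nat \<Rightarrow> nat"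
  assumes proper_N: "proper_tnet N" and proper_m: "proper_tnet m" and t_in: "t \<in> tasks N"
    and inj: "inj_on \<phi> (tasks m)" and fresh: "\<phi> ` tasks m \<inter> tasks N = {}"
begin

abbreviation "D \<equiv> decomp_with N t m \<phi>"

lemma decomp_tasks_cases:
  assumes "x \<in> tasks D"
  obtains (new) a where "a \<in> tasks m" "x = \<phi> a" | (old) "x \<in> tasks N" "x \<noteq> t"
  using assms unfolding tasks_decomp_with by blast

lemma tlab_new: "a \<in> tasks m \<Longrightarrow> tlab D (\<phi> a) = tlab m a"
  using tlab_decomp_with_new[OF inj] .

lemma tlab_old: "u \<in> tasks N \<Longrightarrow> tlab D u = tlab N u"
  using tlab_decomp_with_old[OF fresh] .

lemma fresh_notin: "a \<in> tasks m \<Longrightarrow> \<phi> a \<notin> tasks N"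
  using fresh by blast

lemmas tord_dests = proper_tnet_tordD[OF proper_N] proper_tnet_tordD[OF proper_m]
  inj_onD[OF inj] fresh_notin

lemma tord_new_new:
  "a \<in> tasks m \<Longrightarrow> b \<in> tasks m \<Longrightarrow> (\<phi> a, \<phi> b) \<in> tord D \<longleftrightarrow> (a, b) \<in> tord m"
  unfolding tord_decomp_with by (auto dest: tord_dests)

lemma tord_new_old:
  "a \<in> tasks m \<Longrightarrow> u \<in> tasks N \<Longrightarrow> u \<noteq> t \<Longrightarrow> (\<phi> a, u) \<in> tord D \<longleftrightarrow> (t, u) \<in> tord N"
  unfolding tord_decomp_with by (auto dest: tord_dests)

lemma tord_old_new:
  "a \<in> tasks m \<Longrightarrow> u \<in> tasks N \<Longrightarrow> u \<noteq> t \<Longrightarrow> (u, \<phi> a) \<in> tord D \<longleftrightarrow> (u, t) \<in> tord N"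
  unfolding tord_decomp_with by (auto dest: tord_dests)

lemma tord_old_old:
  "u \<in> tasks N \<Longrightarrow> v \<in> tasks N \<Longrightarrow> u \<noteq> t \<Longrightarrow> v \<noteq> t \<Longrightarrow> (u, v) \<in> tord D \<longleftrightarrow> (u, v) \<in> tord N"
  unfolding tord_decomp_with by (auto dest: tord_dests)

lemma proper_decomp: "proper_tnet D"
  unfolding proper_tnet_def
proof (intro conjI)
  show "finite (tasks D)"
    using proper_N proper_m unfolding proper_tnet_def tasks_decomp_with by simp
  show "tord D \<subseteq> tasks D \<times> tasks D"
    unfolding tord_decomp_with tasks_decomp_with
    by (auto dest: tord_dests simp: proper_tnet_irrefl[OF proper_N])
  show "irrefl (tord D)"
    unfolding irrefl_def tord_decomp_with
    by (auto dest: tord_dests simp: proper_tnet_irrefl[OF proper_N] proper_tnet_irrefl[OF proper_m])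
qed

end

lemma decomp_setting_freshI:
  assumes "proper_tnet N" and "proper_tnet m" and "t \<in> tasks N"
    and "inj \<phi>" and "range \<phi> \<inter> tasks N = {}"
  shows "decomp_setting N t m \<phi>"
  unfolding decomp_setting_def
  using assms inj_on_subset[OF assms(4) subset_UNIV]
    image_mono[OF subset_UNIV, where A = "tasks m" and f = \<phi>] by blast

lemma decomp_stepE:
  assumes "decomp_step C M N t P" and "proper_tnet N" and "proper_methods M"
  obtains m \<phi> where "t \<in> compound_tasks C N" and "(tlab N t, m) \<in> M"
    and "decomp_setting N t m \<phi>" and "P = decomp_with N t m \<phi>"
proof -
  obtain m \<phi> where t: "t \<in> compound_tasks C N" and m: "(tlab N t, m) \<in> M"
    and \<phi>: "inj_on \<phi> (tasks m)" "\<phi> ` tasks m \<inter> tasks N = {}" and P: "P = decomp_with N t m \<phi>"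
    using assms(1) unfolding decomp_step_def by blast
  have "decomp_setting N t m \<phi>"
    unfolding decomp_setting_def using assms(2) proper_methodsD[OF assms(3) m] t \<phi>
    by (simp add: compound_tasks_iff)
  with that t m P show thesis by blast
qed

lemma decomp_stepI:
  assumes "decomp_setting N t m \<phi>" and "(tlab N t, m) \<in> M" and "tlab N t \<in> C"
  shows "decomp_step C M N t (decomp_with N t m \<phi>)"
  using assms unfolding decomp_step_def decomp_setting_def compound_tasks_def by blast

lemma proper_decomp_step:
  "decomp_step C M N t P \<Longrightarrow> proper_tnet N \<Longrightarrow> proper_methods M \<Longrightarrow> proper_tnet P"
  by (metis decomp_stepE decomp_setting.proper_decomp)

lemma proper_decomp_seq:
  "decomp_seq C M N ts P \<Longrightarrow> proper_tnet N \<Longrightarrow> proper_methods M \<Longrightarrow> proper_tnet P"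
  by (induction ts arbitrary: N) (auto intro: proper_decomp_step)

lemma decomposes_to_iff_decomp_seq: "decomposes_to C M N P \<longleftrightarrow> (\<exists>ts. decomp_seq C M N ts P)"
proof
  show "decomposes_to C M N P \<Longrightarrow> \<exists>ts. decomp_seq C M N ts P"
    unfolding decomposes_to_def
    by (induction rule: converse_rtranclp_induct) (meson decomp_seq.simps)+
  show "\<exists>ts. decomp_seq C M N ts P \<Longrightarrow> decomposes_to C M N P"
  proof (elim exE)
    fix ts show "decomp_seq C M N ts P \<Longrightarrow> decomposes_to C M N P"
      unfolding decomposes_to_def
      by (induction ts arbitrary: N) (auto intro: converse_rtranclp_into_rtranclp)
  qed
qed

lemma decomp_step_tasks_subset: "decomp_step C M N t P \<Longrightarrow> tasks N - {t} \<subseteq> tasks P"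
  unfolding decomp_step_def by (auto simp: tasks_decomp_with)

lemma compound_task_survives_step:
  assumes "decomp_step C M N s P" and "t \<in> compound_tasks C N" and "t \<noteq> s"
  shows "t \<in> compound_tasks C P"
  using assms unfolding decomp_step_def compound_tasks_def
  by (auto simp: tasks_decomp_with tlab_decomp_with_old)

lemma decomp_seq_from_primitive: "decomp_seq C M N ts P \<Longrightarrow> primitive C N \<Longrightarrow> P = N"
  by (cases ts) (auto simp: decomp_step_def primitive_def)

section \<open>Decomposition respects isomorphism\<close>

lemma bij_betw_decomp_with:
  assumes A: "decomp_setting N t m \<phi>" and B: "decomp_setting N' t' m' \<phi>'"
    and f: "bij_betw f (tasks N) (tasks N')" and g: "bij_betw g (tasks m) (tasks m')"
    and t': "f t = t'"
  shows "bij_betw (\<lambda>y. if y \<in> \<phi> ` tasks m then \<phi>' (g (inv_into (tasks m) \<phi> y)) else f y)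
    (tasks (decomp_with N t m \<phi>)) (tasks (decomp_with N' t' m' \<phi>'))"
proof -
  interpret A: decomp_setting N t m \<phi> by (fact A)
  interpret B: decomp_setting N' "f t" m' \<phi>' using B t' by simp
  have "bij_betw (inv_into (tasks m) \<phi>) (\<phi> ` tasks m) (tasks m)"
    using bij_betw_inv_into[OF inj_on_imp_bij_betw[OF A.inj]] .
  then have "bij_betw (\<phi>' \<circ> (g \<circ> inv_into (tasks m) \<phi>)) (\<phi> ` tasks m) (\<phi>' ` tasks m')"
    using bij_betw_trans[OF bij_betw_trans[OF _ g] inj_on_imp_bij_betw[OF B.inj]] by blast
  moreover have "bij_betw f (tasks N - {t}) (tasks N' - {f t})"
    using bij_betw_DiffI[OF f, of "{t}" "{f t}"] A.t_in B.t_in by simp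
  ultimately show ?thesis
    unfolding tasks_decomp_with Un_commute[of "_ - _"] t'[symmetric]
    using A.fresh B.fresh by (intro bij_betw_disjoint_Un) (auto simp: comp_def)
qed

lemma decomp_with_iso:
  assumes A: "decomp_setting N t m \<phi>" and B: "decomp_setting N' t' m' \<phi>'"
    and f: "tn_iso_via f N N'" and g: "tn_iso_via g m m'" and t': "f t = t'"
  obtains h where "tn_iso_via h (decomp_with N t m \<phi>) (decomp_with N' t' m' \<phi>')"
    and "\<forall>u\<in>tasks N. h u = f u"
proof -
  interpret A: decomp_setting N t m \<phi> by (fact A)
  interpret B: decomp_setting N' "f t" m' \<phi>' using B t' by simp
  define h where "h y = (if y \<in> \<phi> ` tasks m then \<phi>' (g (inv_into (tasks m) \<phi> y)) else f y)" for y
  have bij: "bij_betw h (tasks A.D) (tasks B.D)"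
    unfolding h_def t'[symmetric]
    by (rule bij_betw_decomp_with[OF A B.decomp_setting_axioms tn_iso_viaD(1)[OF f]
          tn_iso_viaD(1)[OF g] refl])
  have h_new: "h (\<phi> a) = \<phi>' (g a)" if "a \<in> tasks m" for a
    unfolding h_def using that A.inj by simp
  have h_old: "h u = f u" if "u \<in> tasks N" for u
    unfolding h_def using that A.fresh by auto
  have f_ne: "f u \<noteq> f t" if "u \<in> tasks N" "u \<noteq> t" for u
    using that tn_iso_viaD(5)[OF f] A.t_in by blast
  have lab: "tlab B.D (h x) = tlab A.D x" if "x \<in> tasks A.D" for x
    using that
    by (cases rule: A.decomp_tasks_cases)
      (simp_all add: h_new h_old tn_iso_viaD[OF g] tn_iso_viaD[OF f] A.tlab_new B.tlab_new
        A.tlab_old B.tlab_old)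
  have ord: "(x, y) \<in> tord A.D \<longleftrightarrow> (h x, h y) \<in> tord B.D"
    if "x \<in> tasks A.D" "y \<in> tasks A.D" for x y
    using that
    by (elim A.decomp_tasks_cases)
      (simp_all add: h_new h_old f_ne tn_iso_viaD[OF g] tn_iso_viaD(2,4)[OF f] A.t_in
        A.tord_new_new A.tord_new_old A.tord_old_new A.tord_old_old
        B.tord_new_new B.tord_new_old B.tord_old_new B.tord_old_old)
  have "tn_iso_via h A.D B.D"
    unfolding tn_iso_via_def using bij lab ord by blast
  with h_old that t' show thesis by blast
qed

lemma decomp_step_iso:
  assumes step: "decomp_step C M N t P" and "proper_tnet N" and "proper_tnet N'"
    and "proper_methods M" and f: "tn_iso_via f N N'"
  obtains h P' where "decomp_step C M N' (f t) P'" and "tn_iso_via h P P'"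
    and "\<forall>u\<in>tasks N. h u = f u"
proof -
  obtain m \<phi> where t: "t \<in> compound_tasks C N" and m: "(tlab N t, m) \<in> M"
    and A: "decomp_setting N t m \<phi>" and P: "P = decomp_with N t m \<phi>"
    using decomp_stepE[OF assms(1-2,4)] .
  have fin: "finite (tasks N')" using \<open>proper_tnet N'\<close> unfolding proper_tnet_def by simp
  obtain \<phi>' :: "nat \<Rightarrow> nat" where \<phi>': "inj \<phi>'" "range \<phi>' \<inter> tasks N' = {}"
    using exists_fresh_renaming[OF fin] by blast
  have B: "decomp_setting N' (f t) m \<phi>'"
    by (rule decomp_setting_freshI[OF \<open>proper_tnet N'\<close> decomp_setting.proper_m[OF A]
          tn_iso_viaD(2)[OF f decomp_setting.t_in[OF A]] \<phi>'])
  have lab: "tlab N' (f t) = tlab N t"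
    using tn_iso_viaD(3)[OF f] decomp_setting.t_in[OF A] .
  have "decomp_step C M N' (f t) (decomp_with N' (f t) m \<phi>')"
    using decomp_stepI[OF B] m t lab by (simp add: compound_tasks_iff)
  moreover obtain h where "tn_iso_via h P (decomp_with N' (f t) m \<phi>')" "\<forall>u\<in>tasks N. h u = f u"
    using decomp_with_iso[OF A B f tn_iso_via_id refl] unfolding P .
  ultimately show thesis by (rule that)
qed

lemma decomp_seq_iso:
  assumes "decomp_seq C M N ts P" and "proper_tnet N" and "proper_tnet N'"
    and "proper_methods M" and "tn_iso_via f N N'"
  shows "\<exists>ts' P'. decomp_seq C M N' ts' P' \<and> tn_iso P P'
    \<and> (distinct ts \<and> set ts \<subseteq> tasks N \<longrightarrow> ts' = map f ts)"
  using assms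
proof (induction ts arbitrary: N N' f)
  case Nil
  then show ?case using tn_iso_iff_via by fastforce
next
  case (Cons t ts)
  then obtain A where A: "decomp_step C M N t A" "decomp_seq C M A ts P" by auto
  obtain h A' where A': "decomp_step C M N' (f t) A'" "tn_iso_via h A A'" "\<forall>u\<in>tasks N. h u = f u"
    using decomp_step_iso[OF A(1) Cons.prems(2-5)] .
  have "proper_tnet A" "proper_tnet A'"
    using proper_decomp_step A(1) A'(1) Cons.prems(2-4) by blast+
  then obtain ts' P' where IH: "decomp_seq C M A' ts' P'" "tn_iso P P'"
    "distinct ts \<and> set ts \<subseteq> tasks A \<longrightarrow> ts' = map h ts"
    using Cons.IH[OF A(2) _ _ Cons.prems(4) A'(2)] by blast
  have "f t # ts' = map f (t # ts)" if "distinct (t # ts)" "set (t # ts) \<subseteq> tasks N"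
  proof -
    have "set ts \<subseteq> tasks A" using that decomp_step_tasks_subset[OF A(1)] by auto
    then show ?thesis using that IH(3) A'(3) by auto
  qed
  then show ?case using A'(1) IH(1,2) by (intro exI[of _ "f t # ts'"] exI[of _ P']) auto
qed

lemma decomposes_to_iso:
  assumes "decomposes_to C M N P" and "proper_tnet N" and "proper_tnet N'"
    and "proper_methods M" and "tn_iso N N'"
  obtains P' where "decomposes_to C M N' P'" and "tn_iso P P'"
proof -
  obtain f where f: "tn_iso_via f N N'" using assms(5) tn_iso_iff_via by blast
  obtain ts where "decomp_seq C M N ts P" using assms(1) decomposes_to_iff_decomp_seq by blast
  then show thesis
    using decomp_seq_iso[OF _ assms(2-4) f] that decomposes_to_iff_decomp_seq by blast
qed

section \<open>Decompositions of distinct tasks commute\<close>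

lemma proper_tnet_eqI:
  assumes "proper_tnet X" and "proper_tnet Y" and "tasks X = tasks Y" and "tlab X = tlab Y"
    and "\<And>x y. x \<in> tasks X \<Longrightarrow> y \<in> tasks X \<Longrightarrow> (x, y) \<in> tord X \<longleftrightarrow> (x, y) \<in> tord Y"
  shows "X = Y"
proof -
  have "tord X \<subseteq> tasks X \<times> tasks X" "tord Y \<subseteq> tasks X \<times> tasks X"
    using assms(1-3) unfolding proper_tnet_def by auto
  then have "tord X = tord Y" using assms(5) by auto
  then show ?thesis using assms(3,4) by (cases X, cases Y) simp
qed

lemma decomp_setting_decomp_with:
  assumes "decomp_setting N s ms \<phi>" and "decomp_setting N t mt \<psi>" and "s \<noteq> t"
    and "\<phi> ` tasks ms \<inter> \<psi> ` tasks mt = {}"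
  shows "decomp_setting (decomp_with N t mt \<psi>) s ms \<phi>"
  using assms decomp_setting.proper_decomp[OF assms(2)]
  unfolding decomp_setting_def tasks_decomp_with by blast

lemma decomp_with_commute:
  assumes A: "decomp_setting N s ms \<phi>" and B: "decomp_setting N t mt \<psi>" and "s \<noteq> t"
    and disj: "\<phi> ` tasks ms \<inter> \<psi> ` tasks mt = {}"
  shows "decomp_with (decomp_with N t mt \<psi>) s ms \<phi> = decomp_with (decomp_with N s ms \<phi>) t mt \<psi>"
proof -
  interpret A: decomp_setting N s ms \<phi> by (fact A)
  interpret B: decomp_setting N t mt \<psi> by (fact B)
  interpret AB: decomp_setting A.D t mt \<psi>
    using decomp_setting_decomp_with[OF B A] disj \<open>s \<noteq> t\<close> by blast
  interpret BA: decomp_setting B.D s ms \<phi>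
    using decomp_setting_decomp_with[OF A B] disj \<open>s \<noteq> t\<close> by blast
  have tasks_eq: "tasks BA.D = tasks AB.D"
    unfolding tasks_decomp_with using A.fresh B.fresh A.t_in B.t_in \<open>s \<noteq> t\<close> by blast
  have "tlab BA.D = tlab AB.D"
    by (rule ext) (use disj in \<open>auto simp: decomp_with_def\<close>)
  moreover have "(x, y) \<in> tord BA.D \<longleftrightarrow> (x, y) \<in> tord AB.D"
    if "x \<in> tasks BA.D" "y \<in> tasks BA.D" for x y
  proof -
    have cases: "(\<exists>a\<in>tasks ms. z = \<phi> a) \<or> (\<exists>b\<in>tasks mt. z = \<psi> b) \<or> (z \<in> tasks N \<and> z \<noteq> s \<and> z \<noteq> t)"
      if "z \<in> tasks BA.D" for z
      using that unfolding tasks_decomp_with by blast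
    have \<phi>_ne: "\<phi> a \<noteq> s" "\<phi> a \<noteq> t" if "a \<in> tasks ms" for a
      using that A.fresh_notin A.t_in B.t_in by metis+
    have \<psi>_ne: "\<psi> b \<noteq> s" "\<psi> b \<noteq> t" if "b \<in> tasks mt" for b
      using that B.fresh_notin A.t_in B.t_in by metis+
    have \<phi>_\<psi>_ne: "\<phi> a \<noteq> \<psi> b" if "a \<in> tasks ms" "b \<in> tasks mt" for a b
      using that disj by blast
    from cases[OF that(1)] cases[OF that(2)] show ?thesis
      by (elim disjE bexE conjE)
        (simp_all add: tasks_decomp_with \<phi>_ne \<psi>_ne \<phi>_\<psi>_ne \<open>s \<noteq> t\<close> \<open>s \<noteq> t\<close>[symmetric]
          A.t_in B.t_in A.tord_new_new A.tord_new_old A.tord_old_new A.tord_old_old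
          B.tord_new_new B.tord_new_old B.tord_old_new B.tord_old_old
          AB.tord_new_new AB.tord_new_old AB.tord_old_new AB.tord_old_old
          BA.tord_new_new BA.tord_new_old BA.tord_old_new BA.tord_old_old)
  qed
  ultimately show ?thesis
    using proper_tnet_eqI[OF BA.proper_decomp AB.proper_decomp tasks_eq] by blast
qed

lemma decomp_step_commute:
  assumes "proper_tnet N" and "proper_methods M"
    and s: "decomp_step C M N s A" and t: "decomp_step C M A t A2"
    and "t \<in> compound_tasks C N" and "t \<noteq> s"
  obtains B B2 where "decomp_step C M N t B" and "decomp_step C M B s B2" and "tn_iso A2 B2"
proof -
  obtain ms \<phi> where s_comp: "s \<in> compound_tasks C N" and ms: "(tlab N s, ms) \<in> M"
    and SA: "decomp_setting N s ms \<phi>" and A: "A = decomp_with N s ms \<phi>"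
    using decomp_stepE[OF s assms(1,2)] .
  have "proper_tnet A" using decomp_setting.proper_decomp[OF SA] A by simp
  then obtain mt \<phi>t where mt: "(tlab A t, mt) \<in> M"
    and SA2: "decomp_setting A t mt \<phi>t" and A2: "A2 = decomp_with A t mt \<phi>t"
    using decomp_stepE[OF t _ assms(2)] by blast
  have fin: "finite (tasks N \<union> \<phi> ` tasks ms)"
    using assms(1) decomp_setting.proper_m[OF SA] unfolding proper_tnet_def by simp
  txt \<open>Renaming mt by \<psi>, fresh for N and for the copy of ms, makes both orders produce
    literally the same network.\<close>
  obtain \<psi> :: "nat \<Rightarrow> nat" where \<psi>: "inj \<psi>" "range \<psi> \<inter> (tasks N \<union> \<phi> ` tasks ms) = {}"
    using exists_fresh_renaming[OF fin] by blast
  have t_N: "t \<in> tasks N" "tlab N t \<in> C"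
    using \<open>t \<in> compound_tasks C N\<close> by (simp_all add: compound_tasks_iff)
  have SB: "decomp_setting N t mt \<psi>"
    using decomp_setting_freshI[OF assms(1) decomp_setting.proper_m[OF SA2] t_N(1) \<psi>(1)] \<psi>(2)
    by blast
  have disj: "\<phi> ` tasks ms \<inter> \<psi> ` tasks mt = {}" using \<psi>(2) by blast
  have SAB: "decomp_setting A t mt \<psi>"
    using decomp_setting_decomp_with[OF SB SA] disj \<open>t \<noteq> s\<close> unfolding A by blast
  have SBA: "decomp_setting (decomp_with N t mt \<psi>) s ms \<phi>"
    using decomp_setting_decomp_with[OF SA SB] disj \<open>t \<noteq> s\<close> by blast
  have lab_t: "tlab A t = tlab N t"
    using decomp_setting.tlab_old[OF SA t_N(1)] A by simp
  have lab_s: "tlab (decomp_with N t mt \<psi>) s = tlab N s"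
    using decomp_setting.tlab_old[OF SB] decomp_setting.t_in[OF SA] by simp
  have "decomp_step C M N t (decomp_with N t mt \<psi>)"
    using decomp_stepI[OF SB] mt lab_t t_N by simp
  moreover have "decomp_step C M (decomp_with N t mt \<psi>) s (decomp_with A t mt \<psi>)"
    using decomp_stepI[OF SBA] ms lab_s s_comp decomp_with_commute[OF SA SB _ disj] \<open>t \<noteq> s\<close> A
    by (simp add: compound_tasks_iff)
  moreover obtain h where "tn_iso_via h A2 (decomp_with A t mt \<psi>)"
    using decomp_with_iso[OF SA2 SAB tn_iso_via_id tn_iso_via_id id_apply] A2 by auto
  ultimately show thesis using that tn_iso_iff_via by blast
qed

lemma decomp_seq_task_first:
  assumes "decomp_seq C M N ts P" and "primitive C P" and "t \<in> compound_tasks C N"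
    and "proper_tnet N" and "proper_methods M"
  shows "\<exists>ts' P'. decomp_seq C M N (t # ts') P' \<and> tn_iso P P'"
  using assms
proof (induction ts arbitrary: N)
  case Nil
  then show ?case unfolding primitive_def by simp
next
  case (Cons s ts)
  then obtain A where A: "decomp_step C M N s A" "decomp_seq C M A ts P" by auto
  show ?case
  proof (cases "s = t")
    case True
    then show ?thesis using A tn_iso_refl by auto
  next
    case False
    have "t \<in> compound_tasks C A"
      using compound_task_survives_step[OF A(1) Cons.prems(3)] False by simp
    moreover have A_proper: "proper_tnet A" using proper_decomp_step[OF A(1) Cons.prems(4,5)] .
    ultimately obtain ts3 P3 where "decomp_seq C M A (t # ts3) P3" and P3: "tn_iso P P3"
      using Cons.IH[OF A(2) Cons.prems(2) _ _ Cons.prems(5)] by blast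
    then obtain A2 where A2: "decomp_step C M A t A2" "decomp_seq C M A2 ts3 P3" by auto
    obtain B B2 where B: "decomp_step C M N t B" "decomp_step C M B s B2" and "tn_iso A2 B2"
      using decomp_step_commute[OF Cons.prems(4,5) A(1) A2(1) Cons.prems(3)] False by metis
    then obtain h where h: "tn_iso_via h A2 B2" using tn_iso_iff_via by blast
    have "proper_tnet A2" "proper_tnet B2"
      using A_proper A2(1) B Cons.prems(4,5) proper_decomp_step by blast+
    then obtain ts4 P4 where "decomp_seq C M B2 ts4 P4" "tn_iso P3 P4"
      using decomp_seq_iso[OF A2(2) _ _ Cons.prems(5) h] by blast
    then show ?thesis
      using B P3 tn_iso_trans by (intro exI[of _ "s # ts4"] exI[of _ P4]) auto
  qed
qed

lemma decomp_seq_round_first: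
  assumes "decomp_seq C M N path P" and "primitive C P"
    and "distinct ts" and "set ts \<subseteq> compound_tasks C N"
    and "proper_tnet N" and "proper_methods M"
  shows "\<exists>N1 path' P'. decomp_seq C M N ts N1 \<and> decomp_seq C M N1 path' P' \<and> tn_iso P P'"
  using assms
proof (induction ts arbitrary: N path P)
  case Nil
  then show ?case using tn_iso_refl by auto
next
  case (Cons t ts)
  have "t \<in> compound_tasks C N" using Cons.prems(4) by simp
  then obtain path2 P2 where "decomp_seq C M N (t # path2) P2" and P2: "tn_iso P P2"
    using decomp_seq_task_first[OF Cons.prems(1,2) _ Cons.prems(5,6)] by blast
  then obtain A where A: "decomp_step C M N t A" "decomp_seq C M A path2 P2" by auto
  have "primitive C P2" using tn_iso_primitive[OF P2] Cons.prems(2) by simp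
  moreover have "set ts \<subseteq> compound_tasks C A"
    using Cons.prems(3,4) compound_task_survives_step[OF A(1)] by auto
  moreover have "proper_tnet A" using proper_decomp_step[OF A(1) Cons.prems(5,6)] .
  ultimately obtain N1 path' P' where
    "decomp_seq C M A ts N1" "decomp_seq C M N1 path' P'" "tn_iso P2 P'"
    using Cons.IH[OF A(2) _ _ _ _ Cons.prems(6)] Cons.prems(3) by auto
  then show ?case using A(1) tn_iso_trans[OF P2] by auto
qed

section \<open>Counting decompositions\<close>

lemma card_tasks_le_C_s: "finite M \<Longrightarrow> (c, m) \<in> M \<Longrightarrow> card (tasks m) \<le> C_s M"
  unfolding C_s_def by (rule Max_ge) force+

lemma n_iso_classes_le_C_c: "finite C \<Longrightarrow> c \<in> C \<Longrightarrow> n_iso_classes {m. (c, m) \<in> M} \<le> C_c C M"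
  unfolding C_c_def by (intro Max_ge) auto

lemma decomp_step_card_le:
  assumes step: "decomp_step C M N t P" and "proper_tnet N" and "proper_methods M" and "finite M"
  shows "card (tasks P) + 1 \<le> card (tasks N) + C_s M"
    and "card (compound_tasks C P) + 1 \<le> card (compound_tasks C N) + C_s M"
proof -
  obtain m \<phi> where t: "t \<in> compound_tasks C N" and m: "(tlab N t, m) \<in> M"
    and S: "decomp_setting N t m \<phi>" and P: "P = decomp_with N t m \<phi>"
    using decomp_stepE[OF assms(1-3)] .
  interpret decomp_setting N t m \<phi> by (fact S)
  have fin: "finite (tasks N)" "finite (tasks m)"
    using proper_N proper_m unfolding proper_tnet_def by auto
  have new: "card (\<phi> ` tasks m) \<le> C_s M"
    using card_tasks_le_C_s[OF \<open>finite M\<close> m] card_image[OF inj] by simp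
  have "card (tasks P) = card (tasks N - {t}) + card (\<phi> ` tasks m)"
    unfolding P tasks_decomp_with using fresh fin by (subst card_Un_disjoint) auto
  moreover have "card (tasks N - {t}) + 1 = card (tasks N)"
    using t_in fin by (metis card_Suc_Diff1 Suc_eq_plus1)
  ultimately show "card (tasks P) + 1 \<le> card (tasks N) + C_s M" using new by linarith
  have fin_comp: "finite (compound_tasks C N)" using fin unfolding compound_tasks_def by simp
  have "compound_tasks C P \<subseteq> (compound_tasks C N - {t}) \<union> \<phi> ` tasks m"
    unfolding P compound_tasks_def tasks_decomp_with using tlab_old by auto
  then have "card (compound_tasks C P) \<le> card (compound_tasks C N - {t}) + card (\<phi> ` tasks m)"
    using fin_comp fin
    by (meson card_Un_le card_mono finite_Diff finite_UnI finite_imageI order_trans)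
  moreover have "card (compound_tasks C N - {t}) + 1 = card (compound_tasks C N)"
    using t fin_comp by (metis card_Suc_Diff1 Suc_eq_plus1)
  ultimately show "card (compound_tasks C P) + 1 \<le> card (compound_tasks C N) + C_s M"
    using new by linarith
qed

lemma decomp_seq_card_le:
  assumes "decomp_seq C M N ts P" and "proper_tnet N" and "proper_methods M" and "finite M"
  shows "card (tasks P) + length ts \<le> card (tasks N) + length ts * C_s M
    \<and> card (compound_tasks C P) + length ts \<le> card (compound_tasks C N) + length ts * C_s M"
  using assms
proof (induction ts arbitrary: N)
  case (Cons t ts)
  then obtain A where A: "decomp_step C M N t A" "decomp_seq C M A ts P" by auto
  have "proper_tnet A" using proper_decomp_step[OF A(1) Cons.prems(2,3)] .
  then show ?case
    using decomp_step_card_le[OF A(1) Cons.prems(2-4)] Cons.IH[OF A(2) _ Cons.prems(3,4)] by simp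
qed simp

lemma finite_iso_representatives:
  assumes "finite X"
  obtains R where "R \<subseteq> X" and "card R \<le> n_iso_classes X" and "iso_cover R X"
proof
  define iso_class where "iso_class x = {y \<in> X. tn_iso x y}" for x
  define R where "R = (\<lambda>k. SOME x. x \<in> k) ` iso_class ` X"
  have some_in_class: "(SOME y. y \<in> iso_class x) \<in> iso_class x" if "x \<in> X" for x
    using that tn_iso_refl unfolding iso_class_def
    by (metis (mono_tags, lifting) mem_Collect_eq someI)
  show "R \<subseteq> X" using some_in_class unfolding R_def iso_class_def by blast
  show "card R \<le> n_iso_classes X"
    unfolding R_def n_iso_classes_def iso_class_def using assms by (intro card_image_le) simp
  show "iso_cover R X"
    using some_in_class assms unfolding iso_cover_def R_def iso_class_def by blast
qed

text \<open>The isomorphisms fix the old tasks, so that a list of old tasks still to be decomposed can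
  be replayed unchanged on the representative.\<close>

lemma decomp_step_representatives:
  assumes "proper_tnet N" and "proper_methods M" and "finite M" and "finite C"
  obtains Q where "finite Q" and "card Q \<le> C_c C M" and "\<forall>q\<in>Q. decomp_step C M N t q"
    and "\<And>A. decomp_step C M N t A \<Longrightarrow> \<exists>q\<in>Q. \<exists>h. tn_iso_via h A q \<and> (\<forall>u\<in>tasks N. h u = u)"
proof (cases "t \<in> compound_tasks C N")
  case False
  then show thesis using that[of "{}"] unfolding decomp_step_def by simp
next
  case True
  define c where "c = tlab N t"
  have "c \<in> C" "t \<in> tasks N" using True unfolding c_def compound_tasks_def by auto
  have "finite {m. (c, m) \<in> M}"
    using finite_imageI[OF \<open>finite M\<close>, of snd] by (rule finite_subset[rotated]) force
  then obtain R where R: "R \<subseteq> {m. (c, m) \<in> M}" "card R \<le> n_iso_classes {m. (c, m) \<in> M}"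
    "iso_cover R {m. (c, m) \<in> M}"
    by (rule finite_iso_representatives)
  have fin: "finite (tasks N)" using assms(1) unfolding proper_tnet_def by simp
  obtain \<phi> :: "nat \<Rightarrow> nat" where \<phi>: "inj \<phi>" "range \<phi> \<inter> tasks N = {}"
    using exists_fresh_renaming[OF fin] by blast
  have S: "decomp_setting N t r \<phi>" if "r \<in> R" for r
  proof -
    have "proper_tnet r" using that R(1) proper_methodsD[OF assms(2)] by blast
    then show ?thesis
      using decomp_setting_freshI[OF assms(1) _ \<open>t \<in> tasks N\<close> \<phi>] by blast
  qed
  define Q where "Q = (\<lambda>r. decomp_with N t r \<phi>) ` R"
  show thesis
  proof (rule that)
    have "finite R" using R(3) unfolding iso_cover_def by blast
    then show "finite Q" unfolding Q_def by simp
    have "card Q \<le> card R" unfolding Q_def using \<open>finite R\<close> by (rule card_image_le)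
    then show "card Q \<le> C_c C M"
      using R(2) n_iso_classes_le_C_c[OF \<open>finite C\<close> \<open>c \<in> C\<close>, of M] by linarith
    show "\<forall>q\<in>Q. decomp_step C M N t q"
      unfolding Q_def using decomp_stepI[OF S] R(1) \<open>c \<in> C\<close> unfolding c_def by blast
  next
    fix A assume "decomp_step C M N t A"
    then obtain m \<psi> where m: "(c, m) \<in> M" and Sm: "decomp_setting N t m \<psi>"
      and A: "A = decomp_with N t m \<psi>"
      unfolding c_def by (rule decomp_stepE[OF _ assms(1,2)])
    obtain r g where r: "r \<in> R" and g: "tn_iso_via g m r"
      using R(3) m tn_iso_iff_via unfolding iso_cover_def by blast
    obtain h where "tn_iso_via h A (decomp_with N t r \<phi>)" and "\<forall>u\<in>tasks N. h u = id u"
      using decomp_with_iso[OF Sm S[OF r] tn_iso_via_id g id_apply] unfolding A .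
    then show "\<exists>q\<in>Q. \<exists>h. tn_iso_via h A q \<and> (\<forall>u\<in>tasks N. h u = u)"
      unfolding Q_def using r by auto
  qed
qed

lemma decomp_seq_representatives:
  assumes "proper_tnet N" and "proper_methods M" and "finite M" and "finite C"
    and "distinct ts" and "set ts \<subseteq> tasks N"
  shows "\<exists>R. R \<subseteq> {P. decomp_seq C M N ts P} \<and> iso_cover R {P. decomp_seq C M N ts P}
    \<and> card R \<le> C_c C M ^ length ts"
  using assms(1,5,6)
proof (induction ts arbitrary: N)
  case Nil
  then show ?case using tn_iso_refl by (intro exI[of _ "{N}"]) (auto simp: iso_cover_def)
next
  case (Cons t ts)
  obtain Q where Q: "finite Q" "card Q \<le> C_c C M" "\<forall>q\<in>Q. decomp_step C M N t q"
    and Q_cover: "\<And>A. decomp_step C M N t A \<Longrightarrow> \<exists>q\<in>Q. \<exists>h. tn_iso_via h A q \<and> (\<forall>u\<in>tasks N. h u = u)"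
    using decomp_step_representatives[OF Cons.prems(1) assms(2-4)] by blast
  have ts_in: "set ts \<subseteq> tasks A" if "decomp_step C M N t A" for A
    using Cons.prems(2,3) decomp_step_tasks_subset[OF that] by auto
  have "\<forall>q\<in>Q. \<exists>R. R \<subseteq> {P. decomp_seq C M q ts P} \<and> iso_cover R {P. decomp_seq C M q ts P}
    \<and> card R \<le> C_c C M ^ length ts"
  proof
    fix q assume "q \<in> Q"
    then have q: "decomp_step C M N t q" using Q(3) by blast
    have "distinct ts" using Cons.prems(2) by simp
    then show "\<exists>R. R \<subseteq> {P. decomp_seq C M q ts P} \<and> iso_cover R {P. decomp_seq C M q ts P}
      \<and> card R \<le> C_c C M ^ length ts"
      by (rule Cons.IH[OF proper_decomp_step[OF q Cons.prems(1) assms(2)] _ ts_in[OF q]])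
  qed
  from bchoice[OF this] obtain R where "\<forall>q\<in>Q. R q \<subseteq> {P. decomp_seq C M q ts P}
    \<and> iso_cover (R q) {P. decomp_seq C M q ts P} \<and> card (R q) \<le> C_c C M ^ length ts" ..
  then have R: "\<And>q. q \<in> Q \<Longrightarrow> R q \<subseteq> {P. decomp_seq C M q ts P}"
    "\<And>q. q \<in> Q \<Longrightarrow> iso_cover (R q) {P. decomp_seq C M q ts P}"
    "\<And>q. q \<in> Q \<Longrightarrow> card (R q) \<le> C_c C M ^ length ts"
    by simp_all
  have "card (\<Union>q\<in>Q. R q) \<le> (\<Sum>q\<in>Q. card (R q))" by (rule card_UN_le[OF Q(1)])
  also have "\<dots> \<le> card Q * C_c C M ^ length ts" using sum_mono[OF R(3)] by simp
  also have "\<dots> \<le> C_c C M * C_c C M ^ length ts" using Q(2) by simp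
  finally have card: "card (\<Union>q\<in>Q. R q) \<le> C_c C M ^ length (t # ts)" by simp
  have "\<exists>r\<in>\<Union>q\<in>Q. R q. tn_iso P r" if P: "decomp_seq C M N (t # ts) P" for P
  proof -
    obtain A where A: "decomp_step C M N t A" "decomp_seq C M A ts P" using P by auto
    obtain q h where q: "q \<in> Q" and h: "tn_iso_via h A q" "\<forall>u\<in>tasks N. h u = u"
      using Q_cover[OF A(1)] by blast
    have "proper_tnet A" "proper_tnet q"
      using A(1) q Q(3) Cons.prems(1) assms(2) proper_decomp_step by blast+
    then obtain ts' P' where "decomp_seq C M q ts' P'" "tn_iso P P'" "ts' = map h ts"
      using decomp_seq_iso[OF A(2) _ _ assms(2) h(1)] ts_in[OF A(1)] Cons.prems(2) by auto
    moreover have "map h ts = ts" using h(2) Cons.prems(3) by (intro map_idI) auto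
    ultimately have "decomp_seq C M q ts P'" and "tn_iso P P'" by simp_all
    moreover obtain r where "r \<in> R q" "tn_iso P' r"
      using R(2)[OF q] \<open>decomp_seq C M q ts P'\<close> unfolding iso_cover_def by blast
    ultimately show ?thesis using q tn_iso_trans by blast
  qed
  moreover have "finite (\<Union>q\<in>Q. R q)" using Q(1) R(2) unfolding iso_cover_def by blast
  ultimately have "iso_cover (\<Union>q\<in>Q. R q) {P. decomp_seq C M N (t # ts) P}"
    unfolding iso_cover_def by blast
  moreover have "(\<Union>q\<in>Q. R q) \<subseteq> {P. decomp_seq C M N (t # ts) P}" using Q(3) R(1) by auto
  ultimately show ?case using card by blast
qed

section \<open>Induction on the decomposition depth\<close>

lemma exists_round_enumeration:
  assumes "proper_tnet N"
  obtains ts where "distinct ts" and "set ts = compound_tasks C N" and "length ts = C_num C N"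
proof -
  have "finite (compound_tasks C N)"
    using assms unfolding proper_tnet_def compound_tasks_def by simp
  then obtain ts where "distinct ts" "set ts = compound_tasks C N"
    using finite_distinct_list by blast
  with that show thesis unfolding C_num_def using distinct_card by metis
qed

lemma decomposes_to_round_first:
  assumes "decomposes_to C M N P" and "primitive C P"
    and "distinct ts" and "set ts = compound_tasks C N"
    and "proper_tnet N" and "proper_methods M"
  obtains N1 P' where "decomp_seq C M N ts N1" and "decomposes_to C M N1 P'"
    and "primitive C P'" and "tn_iso P P'"
proof -
  obtain path where "decomp_seq C M N path P"
    using assms(1) decomposes_to_iff_decomp_seq by blast
  then obtain N1 path' P' where "decomp_seq C M N ts N1" "decomp_seq C M N1 path' P'" "tn_iso P P'"
    using decomp_seq_round_first[OF _ assms(2,3) _ assms(5,6)] assms(4) by blast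
  with that show thesis
    using assms(2) tn_iso_primitive decomposes_to_iff_decomp_seq by blast
qed

lemma depth_le_after_round:
  "depth_le C M N (Suc d) \<Longrightarrow> decomp_seq C M N ts N1 \<Longrightarrow> distinct ts
    \<Longrightarrow> set ts = compound_tasks C N \<Longrightarrow> depth_le C M N1 d"
  by (auto simp: decomp_all_def)

lemma round_card_le:
  assumes "decomp_seq C M N ts N1" and "distinct ts" and "set ts = compound_tasks C N"
    and "proper_tnet N" and "proper_methods M" and "finite M"
  shows "card (tasks N1) + C_num C N \<le> card (tasks N) + C_num C N * C_s M"
    and "C_num C N1 \<le> C_num C N * C_s M"
  using decomp_seq_card_le[OF assms(1,4-6)] distinct_card[OF assms(2)] assms(3)
  unfolding C_num_def by simp_all

lemma task_bound_step_arith: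
  fixes p k k1 n n1 c :: nat
  assumes "p + k1 \<le> n1 + k1 * c ^ d" and "n1 + k \<le> n + k * c" and "k1 \<le> k * c"
  shows "p + k \<le> n + k * c ^ Suc d"
proof (cases "c = 0")
  case True
  then show ?thesis using assms by simp
next
  case False
  then have "1 \<le> c ^ d" by simp
  obtain e where e: "k * c = k1 + e" using assms(3) le_Suc_ex by blast
  have "e \<le> e * c ^ d" using \<open>1 \<le> c ^ d\<close> by simp
  then have "k1 * c ^ d + k * c \<le> k * c * c ^ d + k1" unfolding e by (simp add: algebra_simps)
  then show ?thesis using assms(1,2) by (simp add: algebra_simps)
qed

lemma primitive_decomposition_card_le:
  assumes "depth_le C M N d" and "proper_tnet N" and "proper_methods M" and "finite M"
    and "decomposes_to C M N P" and "primitive C P"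
  shows "card (tasks P) + C_num C N \<le> card (tasks N) + C_num C N * C_s M ^ d"
  using assms
proof (induction d arbitrary: N P)
  case 0
  then show ?case
    using decomp_seq_from_primitive decomposes_to_iff_decomp_seq by fastforce
next
  case (Suc d)
  obtain ts where ts: "distinct ts" "set ts = compound_tasks C N"
    using exists_round_enumeration[OF Suc.prems(2)] .
  obtain N1 P' where N1: "decomp_seq C M N ts N1" and P': "decomposes_to C M N1 P'"
    "primitive C P'" "tn_iso P P'"
    using decomposes_to_round_first[OF Suc.prems(5,6) ts Suc.prems(2,3)] .
  have "depth_le C M N1 d" using depth_le_after_round[OF Suc.prems(1) N1 ts] .
  moreover have "proper_tnet N1" using proper_decomp_seq[OF N1 Suc.prems(2,3)] .
  ultimately have "card (tasks P') + C_num C N1 \<le> card (tasks N1) + C_num C N1 * C_s M ^ d"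
    using Suc.IH Suc.prems(3,4) P'(1,2) by blast
  then show ?case
    using task_bound_step_arith round_card_le[OF N1 ts Suc.prems(2-4)]
      tn_iso_card_tasks[OF P'(3)] by simp
qed

lemma card_UN_le_power_sum:
  fixes cc cs K :: nat and k :: "'a \<Rightarrow> nat"
  assumes "finite R" and "card R \<le> cc ^ K"
    and "\<And>r. r \<in> R \<Longrightarrow> card (F r) \<le> cc ^ (\<Sum>i<d. k r * cs ^ i)"
    and "\<And>r. r \<in> R \<Longrightarrow> k r \<le> K * cs"
  shows "card (\<Union>r\<in>R. F r) \<le> cc ^ (\<Sum>i<Suc d. K * cs ^ i)"
proof -
  define E where "E = (\<Sum>i<d. K * cs ^ Suc i)"
  have F_card: "card (F r) \<le> cc ^ E" if "r \<in> R" for r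
  proof (cases "cc = 0")
    case True
    then have "K = 0" using assms(1,2) that by (cases K) (auto simp: card_gt_0_iff[symmetric])
    then show ?thesis using assms(3,4)[OF that] True unfolding E_def by simp
  next
    case False
    have "k r * cs ^ i \<le> K * cs ^ Suc i" for i
      using mult_right_mono[OF assms(4)[OF that], of "cs ^ i"] by (simp add: algebra_simps)
    then have "cc ^ (\<Sum>i<d. k r * cs ^ i) \<le> cc ^ E"
      unfolding E_def using False by (intro power_increasing sum_mono) auto
    then show ?thesis using assms(3)[OF that] by linarith
  qed
  have "card (\<Union>r\<in>R. F r) \<le> (\<Sum>r\<in>R. card (F r))" by (rule card_UN_le[OF assms(1)])
  also have "\<dots> \<le> card R * cc ^ E" using sum_mono[OF F_card] by simp
  also have "\<dots> \<le> cc ^ K * cc ^ E" using assms(2) by simp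
  also have "\<dots> = cc ^ (\<Sum>i<Suc d. K * cs ^ i)"
    unfolding E_def sum.lessThan_Suc_shift by (simp add: power_add)
  finally show ?thesis .
qed

lemma primitive_decompositions_iso_cover:
  assumes "depth_le C M N d" and "proper_tnet N" and "proper_methods M"
    and "finite M" and "finite C"
  shows "\<exists>F. iso_cover F {P. decomposes_to C M N P \<and> primitive C P}
    \<and> card F \<le> C_c C M ^ (\<Sum>i<d. C_num C N * C_s M ^ i)"
  using assms(1,2)
proof (induction d arbitrary: N)
  case 0
  then have "decomposes_to C M N P \<Longrightarrow> P = N" for P
    using decomp_seq_from_primitive decomposes_to_iff_decomp_seq by fastforce
  then show ?case using tn_iso_refl by (intro exI[of _ "{N}"]) (auto simp: iso_cover_def)
next
  case (Suc d)
  obtain ts where ts: "distinct ts" "set ts = compound_tasks C N" "length ts = C_num C N"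
    using exists_round_enumeration[OF Suc.prems(2)] .
  have "set ts \<subseteq> tasks N" using ts(2) unfolding compound_tasks_def by auto
  then obtain R where R: "R \<subseteq> {N1. decomp_seq C M N ts N1}"
    "iso_cover R {N1. decomp_seq C M N ts N1}" "card R \<le> C_c C M ^ C_num C N"
    using decomp_seq_representatives[OF Suc.prems(2) assms(3-5) ts(1)] ts(3) by auto
  have r_proper: "proper_tnet r" if "r \<in> R" for r
    using proper_decomp_seq[OF _ Suc.prems(2) assms(3)] R(1) that by blast
  have "\<forall>r\<in>R. \<exists>F. iso_cover F {P. decomposes_to C M r P \<and> primitive C P}
    \<and> card F \<le> C_c C M ^ (\<Sum>i<d. C_num C r * C_s M ^ i)"
    using Suc.IH depth_le_after_round[OF Suc.prems(1) _ ts(1,2)] R(1) r_proper by blast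
  from bchoice[OF this] obtain F where "\<forall>r\<in>R. iso_cover (F r) {P. decomposes_to C M r P \<and> primitive C P}
    \<and> card (F r) \<le> C_c C M ^ (\<Sum>i<d. C_num C r * C_s M ^ i)" ..
  then have F: "\<And>r. r \<in> R \<Longrightarrow> iso_cover (F r) {P. decomposes_to C M r P \<and> primitive C P}"
    "\<And>r. r \<in> R \<Longrightarrow> card (F r) \<le> C_c C M ^ (\<Sum>i<d. C_num C r * C_s M ^ i)"
    by simp_all
  have "finite R" using R(2) unfolding iso_cover_def by blast
  have "card (\<Union>r\<in>R. F r) \<le> C_c C M ^ (\<Sum>i<Suc d. C_num C N * C_s M ^ i)"
  proof (rule card_UN_le_power_sum[OF \<open>finite R\<close> R(3), where k = "C_num C"])
    fix r assume "r \<in> R"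
    then show "card (F r) \<le> C_c C M ^ (\<Sum>i<d. C_num C r * C_s M ^ i)" using F(2) by blast
    show "C_num C r \<le> C_num C N * C_s M"
      using round_card_le(2)[OF _ ts(1,2) Suc.prems(2) assms(3,4)] R(1) \<open>r \<in> R\<close> by blast
  qed
  moreover have "\<exists>z\<in>\<Union>r\<in>R. F r. tn_iso P z"
    if P: "decomposes_to C M N P" "primitive C P" for P
  proof -
    obtain N1 P' where N1: "decomp_seq C M N ts N1" and P': "decomposes_to C M N1 P'"
      "primitive C P'" "tn_iso P P'"
      using decomposes_to_round_first[OF P ts(1,2) Suc.prems(2) assms(3)] .
    obtain r where r: "r \<in> R" "tn_iso N1 r" using R(2) N1 unfolding iso_cover_def by blast
    obtain P'' where P'': "decomposes_to C M r P''" "tn_iso P' P''"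
      by (rule decomposes_to_iso[OF P'(1) proper_decomp_seq[OF N1 Suc.prems(2) assms(3)]
          r_proper[OF r(1)] assms(3) r(2)])
    obtain z where "z \<in> F r" "tn_iso P'' z"
      using F(1)[OF r(1)] P''(1) P'(2) tn_iso_primitive[OF P''(2)] unfolding iso_cover_def by blast
    moreover have "tn_iso P z" using tn_iso_trans[OF P'(3) tn_iso_trans[OF P''(2) \<open>tn_iso P'' z\<close>]] .
    ultimately show ?thesis using r(1) by blast
  qed
  moreover have "finite (\<Union>r\<in>R. F r)" using F(1) \<open>finite R\<close> unfolding iso_cover_def by blast
  ultimately show ?case unfolding iso_cover_def by blast
qed

theorem lemma1:
  fixes A C :: "'l set" and M :: "('l \<times> 'l tnet) set" and tn :: "'l tnet"
  assumes "wf_domain A C M"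
    and "wf_tnet (A \<union> C) tn"
    and "\<exists>i. depth_le C M tn i"
  shows "(\<forall>S. S \<subseteq> {tn'. decomposes_to C M tn tn' \<and> primitive C tn'}
            \<longrightarrow> (\<forall>x\<in>S. \<forall>y\<in>S. x \<noteq> y \<longrightarrow> \<not> tn_iso x y)
            \<longrightarrow> finite S \<and> card S \<le> C_c C M ^ (\<Sum>i<C_d C M tn. C_num C tn * C_s M ^ i))
       \<and> (\<forall>tn'. decomposes_to C M tn tn' \<and> primitive C tn' \<longrightarrow>
            int (card (tasks tn')) \<le> int (card (tasks tn))
              + int (C_num C tn) * (int (C_s M) ^ C_d C M tn - 1))"
proof -
  have "finite C" and "finite M" and "proper_methods M"
    using assms(1) wf_tnet_imp_proper_tnet unfolding wf_domain_def proper_methods_def by fast+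
  have "proper_tnet tn" using wf_tnet_imp_proper_tnet[OF assms(2)] .
  have depth: "depth_le C M tn (C_d C M tn)"
    unfolding C_d_def using assms(3) by (rule LeastI_ex)
  obtain F where F: "iso_cover F {P. decomposes_to C M tn P \<and> primitive C P}"
    and F_card: "card F \<le> C_c C M ^ (\<Sum>i<C_d C M tn. C_num C tn * C_s M ^ i)"
    using primitive_decompositions_iso_cover[OF depth \<open>proper_tnet tn\<close> \<open>proper_methods M\<close>
        \<open>finite M\<close> \<open>finite C\<close>] by blast
  show ?thesis
  proof (rule conjI; intro allI impI)
    fix S assume "S \<subseteq> {tn'. decomposes_to C M tn tn' \<and> primitive C tn'}"
      and "\<forall>x\<in>S. \<forall>y\<in>S. x \<noteq> y \<longrightarrow> \<not> tn_iso x y"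
    moreover from this(1) have "iso_cover F S" using F unfolding iso_cover_def by blast
    ultimately show "finite S \<and> card S \<le> C_c C M ^ (\<Sum>i<C_d C M tn. C_num C tn * C_s M ^ i)"
      using card_le_card_if_iso_cover F_card by (meson order_trans)
  next
    fix tn' assume "decomposes_to C M tn tn' \<and> primitive C tn'"
    then have "card (tasks tn') + C_num C tn \<le> card (tasks tn) + C_num C tn * C_s M ^ C_d C M tn"
      using primitive_decomposition_card_le[OF depth \<open>proper_tnet tn\<close> \<open>proper_methods M\<close>
          \<open>finite M\<close>] by blast
    then have "int (card (tasks tn')) + int (C_num C tn)
        \<le> int (card (tasks tn)) + int (C_num C tn) * int (C_s M) ^ C_d C M tn"
      by (metis of_nat_add of_nat_le_iff of_nat_mult of_nat_power)
    then show "int (card (tasks tn')) \<le> int (card (tasks tn))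
        + int (C_num C tn) * (int (C_s M) ^ C_d C M tn - 1)"
      by (simp add: algebra_simps)
  qed
qed
end
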